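(* Let $\mathscr{D}$ be a finite Borel partition of $\mathbb{R}^d$ with respect to $\mu$, and suppose $y_i(D)\ge0$ satisfy $p_i\mu(S_i^{-1}D)\le y_i(D)$ for every $i\in\{1,\ldots,\ell\}$ and $D\in\mathscr{D}$. Then $H_m(\mathcal{P}\mid\pi^{-1}\mathscr{D})\le\sum_{D\in\mathscr{D}}f(y_1(D),\ldots,y_\ell(D))$, and hence also $H_m(\mathcal{P}\mid\pi^{-1}\mathcal{B}(\mathbb{R}^d))\le\sum_{D\in\mathscr{D}}f(y_1(D),\ldots,y_\ell(D))$.
   Context: $\{S_i\}_{i=1}^\ell$ is an IFS of contracting maps on $\mathbb{R}^d$; $\Sigma=\{1,\ldots,\ell\}^{\mathbb{N}}$; $\pi(x)=\lim_{n}S_{x_1}\circ\cdots\circ S_{x_n}(0)$; $m$ is the Bernoulli product measure with weights $p_i>0$, $\sum p_i=1$; $\mu=m\circ\pi^{-1}$; $\mathcal{P}=\{[i]\}_{i=1}^\ell$, $[i]=\{x:x_1=i\}$; $\mathcal{B}(\mathbb{R}^d)$ is the Borel $\sigma$-algebra; $H_m(\cdot\mid\cdot)$ is conditional entropy. A finite Borel partition w.r.t. $\mu$ is a finite family of Borel sets of full $\mu$-measure with pairwise $\mu$-null intersections. $\varphi(x)=-x\log x$, $\varphi(0)=0$; $f(x_1,\ldots,x_\ell)=(\sum_jx_j)\sum_i\varphi(x_i/\sum_jx_j)$, $f(0,\ldots,0)=0$. *)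

theory Defs
  imports "HOL-Probability.Probability"
begin

definition phi :: "real \<Rightarrow> real" where
  "phi x = (if x = 0 then 0 else - x * ln x)"

definition fent :: "nat \<Rightarrow> (nat \<Rightarrow> real) \<Rightarrow> real" where
  "fent l x = (let s = (\<Sum>j\<in>{1..l}. x j) in
      if (\<forall>i\<in>{1..l}. x i = 0) then 0 else s * (\<Sum>i\<in>{1..l}. phi (x i / s)))"

definition contraction :: "('a::metric_space \<Rightarrow> 'a) \<Rightarrow> bool" where
  "contraction g \<longleftrightarrow> (\<exists>r. 0 \<le> r \<and> r < 1 \<and> (\<forall>x y. dist (g x) (g y) \<le> r * dist x y))"

text \<open>S_{x_1} o ... o S_{x_n}; sequences are indexed from 0, so x_1 is x 0.\<close>
fun word_comp :: "(nat \<Rightarrow> 'a \<Rightarrow> 'a) \<Rightarrow> (nat \<Rightarrow> nat) \<Rightarrow> nat \<Rightarrow> 'a \<Rightarrow> 'a" where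
  "word_comp S x 0 = id"
| "word_comp S x (Suc n) = word_comp S x n \<circ> S (x n)"

definition coding :: "(nat \<Rightarrow> 'a::real_normed_vector \<Rightarrow> 'a) \<Rightarrow> (nat \<Rightarrow> nat) \<Rightarrow> 'a" where
  "coding S x = lim (\<lambda>n. word_comp S x n 0)"

definition letter_measure :: "nat \<Rightarrow> (nat \<Rightarrow> real) \<Rightarrow> nat measure" where
  "letter_measure l p = point_measure {1..l} (\<lambda>i. ennreal (p i))"

definition bernoulli_measure :: "nat \<Rightarrow> (nat \<Rightarrow> real) \<Rightarrow> (nat \<Rightarrow> nat) measure" where
  "bernoulli_measure l p = PiM UNIV (\<lambda>_::nat. letter_measure l p)"

definition cyl :: "nat \<Rightarrow> nat \<Rightarrow> (nat \<Rightarrow> nat) set" where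
  "cyl l i = {x \<in> PiE UNIV (\<lambda>_. {1..l}). x 0 = i}"

definition ifs_measure :: "nat \<Rightarrow> (nat \<Rightarrow> real) \<Rightarrow> (nat \<Rightarrow> 'a::euclidean_space \<Rightarrow> 'a) \<Rightarrow> 'a measure" where
  "ifs_measure l p S = distr (bernoulli_measure l p) borel (coding S)"

definition cond_entropy :: "'b measure \<Rightarrow> 'b set set \<Rightarrow> 'b measure \<Rightarrow> real" where
  "cond_entropy M P F = (\<Sum>A\<in>P. \<integral>x. phi (real_cond_exp M F (indicator A) x) \<partial>M)"

definition finite_borel_partition :: "'a::topological_space measure \<Rightarrow> 'a set set \<Rightarrow> bool" where
  "finite_borel_partition mu DD \<longleftrightarrow> finite DD \<and> DD \<subseteq> sets borel
     \<and> measure mu (space mu - \<Union>DD) = 0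
     \<and> (\<forall>D\<in>DD. \<forall>E\<in>DD. D \<noteq> E \<longrightarrow> measure mu (D \<inter> E) = 0)"

end

theory Submission
  imports Defs
begin

text \<open>Since \<open>phi\<close> lies below its tangent lines, the conditional entropy of the first-letter
  partition given any \<sigma>-algebra \<open>F\<close> is at most the entropy computed cell by cell on a finite
  \<open>F\<close>-measurable partition \<open>{B\<^sub>j}\<close>, namely
  \<open>\<Sum>\<^sub>j m(B\<^sub>j) \<Sum>\<^sub>i phi(m([i] \<inter> B\<^sub>j) / m(B\<^sub>j))\<close>. Take for \<open>B\<^sub>j\<close> the preimages under the coding
  map of the cells of \<open>DD\<close>, made disjoint, together with the \<open>\<mu>\<close>-null rest of the space.
  Self-similarity, \<open>m([i] \<inter> \<pi>\<^sup>-\<^sup>1 D) = p\<^sub>i \<mu>(S\<^sub>i\<^sup>-\<^sup>1 D) \<le> y\<^sub>i(D)\<close>, together with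
  \<open>f(\<nu>) = \<Sum>\<^sub>i (\<Sum>\<nu>) phi(\<nu>\<^sub>i / \<Sum>\<nu>)\<close> and the monotonicity of \<open>f\<close> on the nonnegative orthant,
  bounds the contribution of the cell inside \<open>D\<close> by \<open>f(y(D))\<close>.\<close>

lemma phi_le_tangent:
  assumes t: "0 \<le> t" and c: "0 < c"
  shows "phi t \<le> c - t - t * ln c"
proof (cases "t = 0")
  case True
  then show ?thesis using c by (simp add: phi_def)
next
  case False
  with t have t: "0 < t" by simp
  have "t * ln (c / t) \<le> t * (c / t - 1)"
    using t c by (intro mult_left_mono ln_le_minus_one) auto
  moreover have "t * ln (c / t) = t * ln c - t * ln t" "t * (c / t - 1) = c - t"
    using t c by (simp_all add: ln_div right_diff_distrib field_simps)
  ultimately show ?thesis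
    using t by (simp add: phi_def)
qed

lemma phi_nonneg: "0 \<le> t \<Longrightarrow> t \<le> 1 \<Longrightarrow> 0 \<le> phi t"
  by (simp add: phi_def mult_nonneg_nonpos)

lemma phi_le_one: "0 \<le> t \<Longrightarrow> phi t \<le> 1"
  using phi_le_tangent[of t 1] by simp

lemma scaled_phi_nonneg: "0 \<le> x \<Longrightarrow> x \<le> s \<Longrightarrow> 0 \<le> s * phi (x / s)"
  by (cases "s = 0") (auto intro!: mult_nonneg_nonneg phi_nonneg)

lemma scaled_phi_le:
  fixes x y s s' :: real
  assumes "0 \<le> x" "x \<le> y" "y \<le> s'" "0 < s" "s \<le> s'"
  shows "s * phi (x / s) \<le> s' * phi (y / s') + s * y / s' - x"
proof (cases "y = 0")
  case True
  then show ?thesis using assms by (simp add: phi_def)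
next
  case False
  with assms have y: "0 < y" "0 < s'" by auto
  text \<open>The tangent of \<open>phi\<close> at \<open>y / s'\<close>; its slope term \<open>-x ln (y / s')\<close> only grows when
    \<open>x\<close> is replaced by \<open>y\<close>, as \<open>y \<le> s'\<close>.\<close>
  have "phi (x / s) \<le> y / s' - x / s - x / s * ln (y / s')"
    using assms y by (intro phi_le_tangent) auto
  then have "s * phi (x / s) \<le> s * (y / s' - x / s - x / s * ln (y / s'))"
    using \<open>0 < s\<close> by (intro mult_left_mono) auto
  also have "\<dots> = s * y / s' - x - x * ln (y / s')"
    using \<open>0 < s\<close> by (simp add: field_simps)
  finally have "s * phi (x / s) \<le> s * y / s' - x - x * ln (y / s')" .
  moreover have "- x * ln (y / s') \<le> - y * ln (y / s')"
    using assms y by (intro mult_right_mono_neg) auto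
  ultimately show ?thesis
    using y by (simp add: phi_def)
qed

lemma fent_eq_sum:
  "fent l x = (\<Sum>i\<in>{1..l}. (\<Sum>j\<in>{1..l}. x j) * phi (x i / (\<Sum>j\<in>{1..l}. x j)))"
  by (auto simp: fent_def Let_def sum_distrib_left)

lemma fent_nonneg:
  assumes "\<And>i. i \<in> {1..l} \<Longrightarrow> 0 \<le> x i"
  shows "0 \<le> fent l x"
  unfolding fent_eq_sum
  using assms by (intro sum_nonneg scaled_phi_nonneg member_le_sum) auto

lemma fent_mono:
  assumes x: "\<And>i. i \<in> {1..l} \<Longrightarrow> 0 \<le> x i" and xy: "\<And>i. i \<in> {1..l} \<Longrightarrow> x i \<le> y i"
  shows "fent l x \<le> fent l y"
proof -
  let ?s = "\<Sum>j\<in>{1..l}. x j" and ?s' = "\<Sum>j\<in>{1..l}. y j"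
  have y: "0 \<le> y i" if "i \<in> {1..l}" for i
    using x xy that by (meson order_trans)
  have "0 \<le> ?s" "?s \<le> ?s'"
    using x xy by (auto intro: sum_nonneg sum_mono)
  show ?thesis
  proof (cases "?s = 0")
    case True
    then show ?thesis
      using fent_nonneg[of l y] y by (simp add: fent_eq_sum)
  next
    case False
    with \<open>0 \<le> ?s\<close> have "0 < ?s" by simp
    have "fent l x \<le> (\<Sum>i\<in>{1..l}. ?s' * phi (y i / ?s') + ?s * y i / ?s' - x i)"
      unfolding fent_eq_sum
      using x xy y \<open>0 < ?s\<close> \<open>?s \<le> ?s'\<close> by (intro sum_mono scaled_phi_le member_le_sum) auto
    also have "\<dots> = fent l y + ?s * ?s' / ?s' - ?s"
      by (simp add: fent_eq_sum sum.distrib sum_subtractf sum_distrib_left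
          sum_divide_distrib[symmetric])
    also have "\<dots> = fent l y"
      using \<open>0 < ?s\<close> \<open>?s \<le> ?s'\<close> by simp
    finally show ?thesis .
  qed
qed

lemma (in prob_space) cond_exp_indicator_bounds:
  assumes "subalgebra M F" and "A \<in> events"
  shows "AE x in M. 0 \<le> real_cond_exp M F (indicator A) x \<and> real_cond_exp M F (indicator A) x \<le> 1"
proof -
  interpret finite_measure_subalgebra M F
    by unfold_locales (rule assms(1))
  have "integrable M (indicator A :: 'a \<Rightarrow> real)"
    using assms(2) by (intro integrable_real_indicator) (auto simp: less_top[symmetric])
  then have "AE x in M. real_cond_exp M F (indicator A) x \<le> 1"
    by (intro real_cond_exp_le_c) auto
  moreover have "AE x in M. 0 \<le> real_cond_exp M F (indicator A) x"
    using assms(2) by (intro real_cond_exp_pos) auto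
  ultimately show ?thesis by eventually_elim simp
qed

lemma (in prob_space) integrable_phi_cond_exp:
  assumes "subalgebra M F" and "A \<in> events"
  shows "integrable M (\<lambda>x. phi (real_cond_exp M F (indicator A) x))"
proof (rule integrable_const_bound[where B = 1])
  show "AE x in M. norm (phi (real_cond_exp M F (indicator A) x)) \<le> 1"
    using cond_exp_indicator_bounds[OF assms] by eventually_elim (simp add: phi_nonneg phi_le_one)
  show "(\<lambda>x. phi (real_cond_exp M F (indicator A) x)) \<in> borel_measurable M"
    unfolding phi_def by measurable
qed

lemma (in prob_space) integral_indicator_mult_cond_exp:
  assumes sub: "subalgebra M F" and A: "A \<in> events" and B: "B \<in> sets F"
  shows "(\<integral>x. indicator B x * real_cond_exp M F (indicator A) x \<partial>M) = prob (A \<inter> B)"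
proof -
  interpret finite_measure_subalgebra M F
    by unfold_locales (rule sub)
  have int_A: "integrable M (indicator A :: 'a \<Rightarrow> real)"
    using A by (intro integrable_real_indicator) (auto simp: less_top[symmetric])
  have "B \<in> events"
    using B sub by (auto simp: subalgebra_def)
  have "(\<integral>x. indicator B x * real_cond_exp M F (indicator A) x \<partial>M) = (\<integral>x \<in> B. indicator A x \<partial>M)"
    using real_cond_exp_intA[OF int_A B] by (simp add: set_lebesgue_integral_def)
  also have "\<dots> = prob (A \<inter> B)"
    using A \<open>B \<in> events\<close>
    by (simp add: set_lebesgue_integral_def Int_commute indicator_inter_arith[symmetric])
  finally show ?thesis .
qed

lemma (in prob_space) integral_phi_cond_exp_on_le_tangent:
  assumes sub: "subalgebra M F" and A: "A \<in> events" and B: "B \<in> sets F" and c: "0 < c"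
  shows "(\<integral>x. indicator B x * phi (real_cond_exp M F (indicator A) x) \<partial>M)
    \<le> c * prob B - (1 + ln c) * prob (A \<inter> B)"
proof -
  interpret finite_measure_subalgebra M F
    by unfold_locales (rule sub)
  define h where "h = real_cond_exp M F (indicator A)"
  have B_ev: "B \<in> events"
    using B sub by (auto simp: subalgebra_def)
  have int_A: "integrable M (indicator A :: 'a \<Rightarrow> real)"
    using A by (intro integrable_real_indicator) (auto simp: less_top[symmetric])
  have int_Bh: "integrable M (\<lambda>x. indicator B x * h x)"
    using real_cond_exp_int(1)[OF int_A] B_ev unfolding h_def
    by (intro integrable_mult_indicator[where 'b=real, simplified])
  have int_B: "integrable M (\<lambda>x. c * indicator B x :: real)"
    using B_ev by (intro integrable_mult_right integrable_real_indicator) (auto simp: less_top[symmetric])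
  have "(\<integral>x. indicator B x * phi (h x) \<partial>M)
      \<le> (\<integral>x. c * indicator B x - (1 + ln c) * (indicator B x * h x) \<partial>M)"
  proof (rule integral_mono_AE)
    show "integrable M (\<lambda>x. indicator B x * phi (h x))"
      using integrable_phi_cond_exp[OF sub A] B_ev unfolding h_def
      by (intro integrable_mult_indicator[where 'b=real, simplified])
    show "integrable M (\<lambda>x. c * indicator B x - (1 + ln c) * (indicator B x * h x))"
      using int_B int_Bh by auto
    show "AE x in M. indicator B x * phi (h x) \<le> c * indicator B x - (1 + ln c) * (indicator B x * h x)"
      using cond_exp_indicator_bounds[OF sub A] unfolding h_def[symmetric]
    proof eventually_elim
      case (elim x)
      then have "phi (h x) \<le> c - (1 + ln c) * h x"
        using phi_le_tangent[of "h x" c] c by (simp add: algebra_simps)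
      then show ?case
        by (simp add: indicator_def)
    qed
  qed
  also have "\<dots> = c * prob B - (1 + ln c) * prob (A \<inter> B)"
    using int_B int_Bh B_ev integral_indicator_mult_cond_exp[OF sub A B] unfolding h_def by simp
  finally show ?thesis
    unfolding h_def .
qed

lemma (in prob_space) integral_phi_cond_exp_on_le:
  assumes sub: "subalgebra M F" and A: "A \<in> events" and B: "B \<in> sets F"
  shows "(\<integral>x. indicator B x * phi (real_cond_exp M F (indicator A) x) \<partial>M)
    \<le> prob B * phi (prob (A \<inter> B) / prob B)"
    (is "?I \<le> _")
proof (cases "prob (A \<inter> B) = 0")
  case True
  text \<open>Letting the tangent point tend to \<open>0\<close>.\<close>
  have "?I \<le> 0 + c" if "0 < c" for c
  proof -
    have "c * prob B \<le> c * 1"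
      using that by (intro mult_left_mono) auto
    then show ?thesis
      using integral_phi_cond_exp_on_le_tangent[OF sub A B that] True by simp
  qed
  then have "?I \<le> 0"
    by (rule field_le_epsilon)
  then show ?thesis
    using True by (simp add: phi_def)
next
  case False
  moreover have "prob (A \<inter> B) \<le> prob B"
    using B sub by (intro finite_measure_mono) (auto simp: subalgebra_def)
  ultimately have pos: "0 < prob (A \<inter> B)" "0 < prob B"
    using measure_nonneg[of M "A \<inter> B"] by linarith+
  have "?I \<le> prob (A \<inter> B) / prob B * prob B - (1 + ln (prob (A \<inter> B) / prob B)) * prob (A \<inter> B)"
    using pos by (intro integral_phi_cond_exp_on_le_tangent[OF sub A B]) auto
  also have "\<dots> = prob B * phi (prob (A \<inter> B) / prob B)"
    using pos by (simp add: phi_def field_simps)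
  finally show ?thesis .
qed

lemma (in prob_space) integral_phi_cond_exp_le_partition:
  assumes sub: "subalgebra M F" and A: "A \<in> events" and "finite J"
    and B: "\<And>j. j \<in> J \<Longrightarrow> B j \<in> sets F"
    and disj: "disjoint_family_on B J" and cover: "(\<Union>j\<in>J. B j) = space M"
  shows "(\<integral>x. phi (real_cond_exp M F (indicator A) x) \<partial>M)
    \<le> (\<Sum>j\<in>J. prob (B j) * phi (prob (A \<inter> B j) / prob (B j)))"
proof -
  let ?g = "\<lambda>x. phi (real_cond_exp M F (indicator A) x)"
  have B_ev: "B j \<in> events" if "j \<in> J" for j
    using B[OF that] sub by (auto simp: subalgebra_def)
  have "(\<integral>x. ?g x \<partial>M) = (\<integral>x. (\<Sum>j\<in>J. ?g x * indicator (B j) x) \<partial>M)"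
  proof (rule Bochner_Integration.integral_cong[OF refl])
    fix x assume "x \<in> space M"
    then obtain j where "j \<in> J" "x \<in> B j"
      using cover by auto
    then show "?g x = (\<Sum>j\<in>J. ?g x * indicator (B j) x)"
      using sum_indicator_disjoint_family[OF disj _ \<open>finite J\<close>, of x j "\<lambda>_. ?g x"] by simp
  qed
  also have "\<dots> = (\<Sum>j\<in>J. \<integral>x. indicator (B j) x * ?g x \<partial>M)"
  proof (subst Bochner_Integration.integral_sum)
    show "integrable M (\<lambda>x. ?g x * indicator (B j) x)" if "j \<in> J" for j
      using integrable_phi_cond_exp[OF sub A] B_ev[OF that]
      by (subst mult.commute) (intro integrable_mult_indicator[where 'b=real, simplified])
  qed (simp add: mult.commute)
  also have "\<dots> \<le> (\<Sum>j\<in>J. prob (B j) * phi (prob (A \<inter> B j) / prob (B j)))"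
    using sub A B by (intro sum_mono integral_phi_cond_exp_on_le)
  finally show ?thesis .
qed

lemma contraction_imp_continuous_on:
  assumes "contraction g"
  shows "continuous_on UNIV g"
proof -
  obtain r where "\<forall>x y. dist (g x) (g y) \<le> r * dist x y" "0 \<le> r"
    using assms unfolding contraction_def by blast
  then have "r-lipschitz_on UNIV g"
    by (intro lipschitz_onI) auto
  then show ?thesis
    by (rule lipschitz_on_continuous_on)
qed

lemma contractions_common_ratio:
  assumes "finite I" and "\<And>i. i \<in> I \<Longrightarrow> contraction (g i)"
  obtains r where "0 \<le> r" "r < 1" "\<And>i x y. i \<in> I \<Longrightarrow> dist (g i x) (g i y) \<le> r * dist x y"
proof -
  obtain rr where rr: "\<And>i. i \<in> I \<Longrightarrow> 0 \<le> rr i \<and> rr i < 1 \<and> (\<forall>x y. dist (g i x) (g i y) \<le> rr i * dist x y)"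
    using assms(2) unfolding contraction_def by metis
  define r where "r = Max (insert 0 (rr ` I))"
  have "0 \<le> r"
    unfolding r_def using assms(1) by (intro Max_ge) auto
  moreover have "r \<in> insert 0 (rr ` I)"
    unfolding r_def using assms(1) by (intro Max_in) auto
  then have "r < 1"
    using rr by auto
  moreover have "dist (g i x) (g i y) \<le> r * dist x y" if "i \<in> I" for i x y
  proof -
    have "rr i \<le> r"
      unfolding r_def using assms(1) that by (intro Max_ge) auto
    then have "rr i * dist x y \<le> r * dist x y"
      by (simp add: mult_right_mono)
    then show ?thesis
      using rr[OF that] order_trans by blast
  qed
  ultimately show ?thesis by (rule that)
qed

lemma word_comp_dist_le:
  assumes "0 \<le> r" and lip: "\<And>n a b. dist (S (x n) a) (S (x n) b) \<le> r * dist a b"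
  shows "dist (word_comp S x n a) (word_comp S x n b) \<le> r ^ n * dist a b"
proof (induction n arbitrary: a b)
  case 0
  then show ?case by simp
next
  case (Suc n)
  have "dist (word_comp S x (Suc n) a) (word_comp S x (Suc n) b)
      \<le> r ^ n * dist (S (x n) a) (S (x n) b)"
    using Suc.IH by simp
  also have "\<dots> \<le> r ^ n * (r * dist a b)"
    using lip \<open>0 \<le> r\<close> by (intro mult_left_mono) auto
  finally show ?case
    by (simp add: ac_simps)
qed

lemma word_comp_LIMSEQ_coding:
  fixes S :: "nat \<Rightarrow> 'a::banach \<Rightarrow> 'a"
  assumes "0 \<le> r" "r < 1" and lip: "\<And>n a b. dist (S (x n) a) (S (x n) b) \<le> r * dist a b"
    and bound: "\<And>n. norm (S (x n) 0) \<le> C"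
  shows "(\<lambda>n. word_comp S x n 0) \<longlonglongrightarrow> coding S x"
proof -
  define d where "d k = word_comp S x (Suc k) 0 - word_comp S x k 0" for k
  have norm_d: "norm (d k) \<le> r ^ k * C" for k
  proof -
    have "norm (d k) = dist (word_comp S x k (S (x k) 0)) (word_comp S x k 0)"
      by (simp add: d_def dist_norm)
    also have "\<dots> \<le> r ^ k * dist (S (x k) 0) 0"
      using \<open>0 \<le> r\<close> lip by (rule word_comp_dist_le)
    also have "\<dots> \<le> r ^ k * C"
      using \<open>0 \<le> r\<close> bound by (intro mult_left_mono) auto
    finally show ?thesis .
  qed
  have "summable (\<lambda>k. r ^ k * C)"
    using assms by (intro summable_mult2 summable_geometric) auto
  then have "summable d"
    by (rule summable_comparison_test') (rule norm_d)
  then have "(\<lambda>n. \<Sum>k<n. d k) \<longlonglongrightarrow> suminf d"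
    by (rule summable_LIMSEQ)
  moreover have "(\<Sum>k<n. d k) = word_comp S x n 0" for n
    unfolding d_def by (subst sum_lessThan_telescope) simp
  ultimately have "convergent (\<lambda>n. word_comp S x n 0)"
    by (auto intro: convergentI)
  then show ?thesis
    unfolding coding_def by (rule convergent_LIMSEQ_iff[THEN iffD1])
qed

lemma word_comp_Suc_case_nat: "word_comp S (case_nat i x) (Suc n) z = S i (word_comp S x n z)"
proof (induction n arbitrary: z)
  case (Suc n)
  have "word_comp S (case_nat i x) (Suc (Suc n)) z = word_comp S (case_nat i x) (Suc n) (S (x n) z)"
    by (simp only: word_comp.simps(2)[of S "case_nat i x" "Suc n"] comp_def nat.case)
  also have "\<dots> = S i (word_comp S x n (S (x n) z))"
    by (rule Suc.IH)
  finally show ?case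
    by simp
qed simp

lemma finite_sets_disjointed_cover:
  assumes "finite DD" and "DD \<subseteq> sets N"
  obtains h C where "bij_betw h {..<card DD} DD" "\<And>j. C j \<in> sets N" "disjoint_family C"
    "(\<Union>j<Suc (card DD). C j) = space N" "\<And>j. j < card DD \<Longrightarrow> C j \<subseteq> h j"
    "C (card DD) \<subseteq> space N - \<Union>DD"
proof -
  obtain h where h: "bij_betw h {..<card DD} DD"
    using ex_bij_betw_nat_finite[OF assms(1)] by (auto simp: atLeast0LessThan)
  define A where "A j = (if j < card DD then h j else space N - \<Union>DD)" for j
  have "\<Union>DD \<in> sets N"
    using assms by (intro sets.finite_Union) auto
  then have "range A \<subseteq> sets N"
    using h assms(2) by (auto simp: A_def bij_betw_def)
  have cover: "(\<Union>j<Suc (card DD). A j) = space N"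
  proof (intro equalityI subsetI)
    fix x assume "x \<in> space N"
    show "x \<in> (\<Union>j<Suc (card DD). A j)"
    proof (cases "x \<in> \<Union>DD")
      case True
      then obtain j where "j < card DD" "x \<in> h j"
        using bij_betw_imp_surj_on[OF h] by blast
      then show ?thesis
        unfolding A_def by (intro UN_I[of j]) auto
    next
      case False
      then show ?thesis
        using \<open>x \<in> space N\<close> unfolding A_def by (intro UN_I[of "card DD"]) auto
    qed
  qed (use \<open>range A \<subseteq> sets N\<close> sets.sets_into_space in blast)
  show ?thesis
  proof (rule that[of h "disjointed A"])
    show "disjointed A j \<in> sets N" for j
      using sets.range_disjointed_sets[OF \<open>range A \<subseteq> sets N\<close>] by blast
    show "(\<Union>j<Suc (card DD). disjointed A j) = space N"
      using finite_UN_disjointed_eq[of A "Suc (card DD)"] cover by (simp add: atLeast0LessThan)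
    show "disjointed A j \<subseteq> h j" if "j < card DD" for j
      using disjointed_subset[of A j] that by (simp add: A_def)
    show "disjointed A (card DD) \<subseteq> space N - \<Union>DD"
      using disjointed_subset[of A "card DD"] by (simp add: A_def)
  qed (use h disjoint_family_disjointed in auto)
qed

lemma subalgebra_vimage_algebra:
  "f \<in> measurable M N \<Longrightarrow> subalgebra M (vimage_algebra (space M) f N)"
  by (simp add: subalgebra_def sets_image_in_sets)

locale ifs =
  fixes l :: nat and p :: "nat \<Rightarrow> real" and S :: "nat \<Rightarrow> 'a::euclidean_space \<Rightarrow> 'a"
  assumes contr: "\<And>i. i \<in> {1..l} \<Longrightarrow> contraction (S i)"
    and p_pos: "\<And>i. i \<in> {1..l} \<Longrightarrow> 0 < p i"
    and p_sum: "(\<Sum>i\<in>{1..l}. p i) = 1"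
begin

abbreviation "L \<equiv> letter_measure l p"
abbreviation "M \<equiv> bernoulli_measure l p"
abbreviation "\<mu> \<equiv> ifs_measure l p S"

lemma space_letter_measure [simp]: "space L = {1..l}"
  by (simp add: letter_measure_def space_point_measure)

lemma sets_letter_measure [simp]: "sets L = Pow {1..l}"
  by (simp add: letter_measure_def sets_point_measure)

lemma measure_letter_measure: "i \<in> {1..l} \<Longrightarrow> measure L {i} = p i"
  using p_pos unfolding letter_measure_def
  by (subst measure_point_measure_finite_if) (auto simp: less_imp_le)

lemma prob_space_letter_measure: "prob_space L"
proof
  have "emeasure L {1..l} = (\<Sum>i\<in>{1..l}. ennreal (p i))"
    unfolding letter_measure_def by (rule emeasure_point_measure_finite) auto
  also have "\<dots> = ennreal (\<Sum>i\<in>{1..l}. p i)"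
    using p_pos by (intro sum_ennreal) (auto intro: less_imp_le)
  finally show "emeasure L (space L) = 1"
    using p_sum by simp
qed

sublocale bernoulli: sequence_space L
  by (simp add: sequence_space_def product_prob_space_def product_prob_space_axioms_def
      product_sigma_finite_def prob_space_letter_measure prob_space_imp_sigma_finite)

lemma bernoulli_measure_eq: "M = (\<Pi>\<^sub>M i\<in>UNIV. L)"
  by (simp add: bernoulli_measure_def)

lemma space_bernoulli_measure: "space M = PiE UNIV (\<lambda>_. {1..l})"
  by (simp add: bernoulli_measure_def space_PiM)

lemma letter_in_range: "x \<in> space M \<Longrightarrow> x n \<in> {1..l}"
  by (simp add: space_bernoulli_measure PiE_iff)

lemma prob_space_bernoulli_measure: "prob_space M"
  unfolding bernoulli_measure_eq by (rule bernoulli.P.prob_space_axioms)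

lemma measurable_letter: "(\<lambda>x. x n) \<in> measurable M (count_space {1..l})"
proof -
  have "(\<lambda>x. x n) \<in> measurable M L"
    unfolding bernoulli_measure_eq by (rule measurable_component_singleton) simp
  moreover have "measurable M L = measurable M (count_space {1..l})"
    by (rule measurable_cong_sets) simp_all
  ultimately show ?thesis
    by simp
qed

lemma coding_LIMSEQ: "x \<in> space M \<Longrightarrow> (\<lambda>n. word_comp S x n 0) \<longlonglongrightarrow> coding S x"
proof -
  assume x: "x \<in> space M"
  obtain r where r: "0 \<le> r" "r < 1" "\<And>i a b. i \<in> {1..l} \<Longrightarrow> dist (S i a) (S i b) \<le> r * dist a b"
    by (rule contractions_common_ratio[of "{1..l}" S]) (simp_all add: contr)
  show ?thesis
  proof (rule word_comp_LIMSEQ_coding[OF r(1,2)])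
    show "dist (S (x n) a) (S (x n) b) \<le> r * dist a b" for n a b
      by (rule r(3)[OF letter_in_range[OF x]])
    show "norm (S (x n) 0) \<le> (\<Sum>i\<in>{1..l}. norm (S i 0))" for n
      using letter_in_range[OF x] by (intro member_le_sum) auto
  qed
qed

lemma measurable_S: "i \<in> {1..l} \<Longrightarrow> S i \<in> borel_measurable borel"
  by (intro borel_measurable_continuous_onI contraction_imp_continuous_on contr)

lemma measurable_word_comp:
  "g \<in> borel_measurable M \<Longrightarrow> (\<lambda>x. word_comp S x n (g x)) \<in> borel_measurable M"
proof (induction n arbitrary: g)
  case (Suc n)
  have "(\<lambda>x. S (x n) (g x)) \<in> borel_measurable M"
    using measurable_compose[OF Suc.prems measurable_S] measurable_letter
    by (rule measurable_compose_countable'[where I = "{1..l}"]) auto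
  from Suc.IH[OF this] show ?case
    by simp
qed simp

lemma measurable_coding: "coding S \<in> borel_measurable M"
proof (rule borel_measurable_LIMSEQ_metric)
  show "(\<lambda>x. word_comp S x n 0) \<in> borel_measurable M" for n
    using measurable_word_comp[of "\<lambda>_. 0" n] by simp
qed (rule coding_LIMSEQ)

lemma case_nat_in_space: "x \<in> space M \<Longrightarrow> i \<in> {1..l} \<Longrightarrow> case_nat i x \<in> space M"
  by (auto simp: space_bernoulli_measure PiE_iff split: nat.split)

lemma coding_case_nat:
  assumes x: "x \<in> space M" and i: "i \<in> {1..l}"
  shows "coding S (case_nat i x) = S i (coding S x)"
proof -
  have "(\<lambda>n. word_comp S (case_nat i x) (Suc n) 0) \<longlonglongrightarrow> coding S (case_nat i x)"
    using case_nat_in_space[OF x i] by (intro LIMSEQ_Suc coding_LIMSEQ)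
  moreover have "isCont (S i) (coding S x)"
    using contraction_imp_continuous_on[OF contr[OF i]] by (simp add: continuous_on_eq_continuous_at)
  then have "(\<lambda>n. word_comp S (case_nat i x) (Suc n) 0) \<longlonglongrightarrow> S i (coding S x)"
    unfolding word_comp_Suc_case_nat using coding_LIMSEQ[OF x] by (rule isCont_tendsto_compose)
  ultimately show ?thesis
    by (rule LIMSEQ_unique)
qed

lemma measure_coding_vimage:
  "B \<in> sets borel \<Longrightarrow> measure M (coding S -` B \<inter> space M) = measure \<mu> B"
  unfolding ifs_measure_def using measurable_coding by (simp add: measure_distr)

lemma cyl_eq: "cyl l i = {x \<in> space M. x 0 = i}"
  by (simp add: cyl_def space_bernoulli_measure)

lemma sets_cyl: "cyl l i \<in> sets M"
proof -
  have eq: "cyl l i = (\<lambda>x. x 0) -` ({i} \<inter> {1..l}) \<inter> space M"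
    unfolding cyl_eq using letter_in_range by blast
  show ?thesis
    unfolding eq by (rule measurable_sets[OF measurable_letter]) simp
qed

lemma inj_on_cyl: "inj_on (cyl l) {1..l}"
proof
  fix i j assume i: "i \<in> {1..l}" and eq: "cyl l i = cyl l j"
  have "(\<lambda>_. i) \<in> cyl l i"
    using i by (simp add: cyl_def PiE_iff)
  then have "(\<lambda>_. i) \<in> cyl l j"
    by (simp only: eq)
  then show "i = j"
    by (simp add: cyl_def)
qed

lemma sum_measure_cyl_Int:
  assumes "X \<in> sets M"
  shows "(\<Sum>i\<in>{1..l}. measure M (cyl l i \<inter> X)) = measure M X"
proof -
  interpret prob_space M
    by (rule prob_space_bernoulli_measure)
  have "x \<in> space M" if "x \<in> X" for x
    using sets.sets_into_space[OF assms] that by auto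
  then have "(\<Union>i\<in>{1..l}. cyl l i \<inter> X) = X"
    unfolding cyl_eq using letter_in_range by blast
  moreover have "measure M (\<Union>i\<in>{1..l}. cyl l i \<inter> X) = (\<Sum>i\<in>{1..l}. measure M (cyl l i \<inter> X))"
  proof (rule finite_measure_finite_Union)
    show "(\<lambda>i. cyl l i \<inter> X) ` {1..l} \<subseteq> sets M"
      using assms sets_cyl by blast
    show "disjoint_family_on (\<lambda>i. cyl l i \<inter> X) {1..l}"
      unfolding disjoint_family_on_def cyl_eq by blast
  qed simp
  ultimately show ?thesis
    by simp
qed

lemma measure_cyl_Int_coding_vimage:
  assumes B: "B \<in> sets borel" and i: "i \<in> {1..l}"
  shows "measure M (cyl l i \<inter> (coding S -` B \<inter> space M)) = p i * measure \<mu> (S i -` B)"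
proof -
  text \<open>\<open>M\<close> is the image of \<open>L \<Otimes>\<^sub>M M\<close> under prepending a letter, and prepending \<open>i\<close>
    turns the coding map into \<open>S i\<close> composed with it.\<close>
  let ?cons = "\<lambda>(j, x). case_nat j x"
  have cons_measurable: "?cons \<in> measurable (L \<Otimes>\<^sub>M M) M"
    unfolding bernoulli_measure_eq by measurable
  have SB: "S i -` B \<in> sets borel"
    using measurable_sets[OF measurable_S[OF i] B] by simp
  have "cyl l i \<inter> (coding S -` B \<inter> space M) \<in> sets M"
    using sets_cyl measurable_sets[OF measurable_coding B] by blast
  moreover have "?cons -` (cyl l i \<inter> (coding S -` B \<inter> space M)) \<inter> space (L \<Otimes>\<^sub>M M)
      = {i} \<times> (coding S -` (S i -` B) \<inter> space M)"
  proof (intro set_eqI iffI)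
    fix z assume "z \<in> ?cons -` (cyl l i \<inter> (coding S -` B \<inter> space M)) \<inter> space (L \<Otimes>\<^sub>M M)"
    then show "z \<in> {i} \<times> (coding S -` (S i -` B) \<inter> space M)"
      using coding_case_nat[OF _ i] by (auto simp: space_pair_measure cyl_eq)
  next
    fix z assume "z \<in> {i} \<times> (coding S -` (S i -` B) \<inter> space M)"
    then show "z \<in> ?cons -` (cyl l i \<inter> (coding S -` B \<inter> space M)) \<inter> space (L \<Otimes>\<^sub>M M)"
      using coding_case_nat[OF _ i] case_nat_in_space[OF _ i] i
      by (auto simp: space_pair_measure cyl_eq)
  qed
  ultimately have "measure M (cyl l i \<inter> (coding S -` B \<inter> space M))
      = measure (L \<Otimes>\<^sub>M M) ({i} \<times> (coding S -` (S i -` B) \<inter> space M))"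
    using bernoulli.PiM_iter measure_distr[OF cons_measurable] unfolding bernoulli_measure_eq
    by metis
  also have "\<dots> = measure L {i} * measure M (coding S -` (S i -` B) \<inter> space M)"
  proof -
    interpret sigma_finite_measure M
      using prob_space_bernoulli_measure by (rule prob_space_imp_sigma_finite)
    show ?thesis
      unfolding measure_def using i measurable_sets[OF measurable_coding SB]
      by (subst emeasure_pair_measure_Times) (auto simp: enn2real_mult)
  qed
  also have "\<dots> = p i * measure \<mu> (S i -` B)"
    using measure_letter_measure[OF i] measure_coding_vimage[OF SB] by simp
  finally show ?thesis .
qed

lemma cell_entropy_le_fent:
  assumes D: "D \<in> sets borel" and B: "B \<in> sets M" "B \<subseteq> coding S -` D"
    and y: "\<And>i. i \<in> {1..l} \<Longrightarrow> p i * measure \<mu> (S i -` D) \<le> y i"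
  shows "(\<Sum>i\<in>{1..l}. measure M B * phi (measure M (cyl l i \<inter> B) / measure M B)) \<le> fent l y"
proof -
  interpret prob_space M
    by (rule prob_space_bernoulli_measure)
  define \<nu> where "\<nu> i = measure M (cyl l i \<inter> B)" for i
  have "(\<Sum>i\<in>{1..l}. measure M B * phi (\<nu> i / measure M B)) = fent l \<nu>"
    unfolding fent_eq_sum \<nu>_def sum_measure_cyl_Int[OF B(1)] ..
  also have "\<dots> \<le> fent l y"
  proof (rule fent_mono)
    show "0 \<le> \<nu> i" for i
      by (simp add: \<nu>_def)
    show "\<nu> i \<le> y i" if i: "i \<in> {1..l}" for i
    proof -
      have "\<nu> i \<le> measure M (cyl l i \<inter> (coding S -` D \<inter> space M))"
        unfolding \<nu>_def using B sets.sets_into_space[OF B(1)] sets_cyl measurable_sets[OF measurable_coding D]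
        by (intro finite_measure_mono) auto
      also have "\<dots> = p i * measure \<mu> (S i -` D)"
        using D i by (rule measure_cyl_Int_coding_vimage)
      finally show ?thesis
        using y[OF i] by simp
    qed
  qed
  finally show ?thesis
    unfolding \<nu>_def .
qed

lemma cell_entropy_eq_0:
  assumes E: "E \<in> sets borel" "measure \<mu> E = 0" and B: "B \<in> sets M" "B \<subseteq> coding S -` E"
  shows "(\<Sum>i\<in>{1..l}. measure M B * phi (measure M (cyl l i \<inter> B) / measure M B)) = 0"
proof -
  interpret prob_space M
    by (rule prob_space_bernoulli_measure)
  have "measure M B \<le> measure M (coding S -` E \<inter> space M)"
    using B sets.sets_into_space[OF B(1)] measurable_sets[OF measurable_coding E(1)]
    by (intro finite_measure_mono) auto
  also have "\<dots> = 0"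
    using measure_coding_vimage[OF E(1)] E(2) by simp
  finally show ?thesis
    using measure_nonneg[of M B] by simp
qed

lemma cond_entropy_cyl_le_partition:
  assumes sub: "subalgebra M F" and "finite J" and B: "\<And>j. j \<in> J \<Longrightarrow> B j \<in> sets F"
    and disj: "disjoint_family_on B J" and cover: "(\<Union>j\<in>J. B j) = space M"
  shows "cond_entropy M (cyl l ` {1..l}) F
    \<le> (\<Sum>j\<in>J. \<Sum>i\<in>{1..l}. measure M (B j) * phi (measure M (cyl l i \<inter> B j) / measure M (B j)))"
proof -
  interpret prob_space M
    by (rule prob_space_bernoulli_measure)
  have "cond_entropy M (cyl l ` {1..l}) F
      = (\<Sum>i\<in>{1..l}. \<integral>x. phi (real_cond_exp M F (indicator (cyl l i)) x) \<partial>M)"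
    unfolding cond_entropy_def by (subst sum.reindex[OF inj_on_cyl]) simp
  also have "\<dots> \<le> (\<Sum>i\<in>{1..l}. \<Sum>j\<in>J. measure M (B j) * phi (measure M (cyl l i \<inter> B j) / measure M (B j)))"
    using assms sets_cyl by (intro sum_mono integral_phi_cond_exp_le_partition) auto
  finally show ?thesis
    by (subst (asm) sum.swap)
qed

lemma cond_entropy_vimage_le_sum_fent:
  fixes N :: "'a measure"
  assumes part: "finite_borel_partition \<mu> DD"
    and y: "\<And>i D. i \<in> {1..l} \<Longrightarrow> D \<in> DD \<Longrightarrow> p i * measure \<mu> (S i -` D) \<le> y i D"
    and N: "space N = UNIV" "sets N \<subseteq> sets borel" "DD \<subseteq> sets N"
  shows "cond_entropy M (cyl l ` {1..l}) (vimage_algebra (space M) (coding S) N)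
    \<le> (\<Sum>D\<in>DD. fent l (\<lambda>i. y i D))"
proof -
  let ?F = "vimage_algebra (space M) (coding S) N" and ?k = "card DD"
  have DD: "finite DD" "measure \<mu> (UNIV - \<Union>DD) = 0"
    using part by (simp_all add: finite_borel_partition_def ifs_measure_def)
  obtain h C where h: "bij_betw h {..<?k} DD" and C: "\<And>j. C j \<in> sets N" "disjoint_family C"
    "(\<Union>j<Suc ?k. C j) = UNIV" "\<And>j. j < ?k \<Longrightarrow> C j \<subseteq> h j" "C ?k \<subseteq> UNIV - \<Union>DD"
    using finite_sets_disjointed_cover[OF DD(1) N(3)] N(1) by metis
  define B where "B j = coding S -` C j \<inter> space M" for j
  let ?H = "\<lambda>j. \<Sum>i\<in>{1..l}. measure M (B j) * phi (measure M (cyl l i \<inter> B j) / measure M (B j))"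
  have sub: "subalgebra M ?F"
    using measurable_mono[of N borel M M] N measurable_coding by (auto intro: subalgebra_vimage_algebra)
  have B_F: "B j \<in> sets ?F" for j
    unfolding B_def using C(1) by (rule in_vimage_algebra)
  then have B_M: "B j \<in> sets M" for j
    using sub by (auto simp: subalgebra_def)
  have "disjoint_family_on B {..<Suc ?k}"
    using C(2) unfolding disjoint_family_on_def B_def by blast
  moreover have "(\<Union>j<Suc ?k. B j) = space M"
    using C(3) unfolding B_def by blast
  ultimately have "cond_entropy M (cyl l ` {1..l}) ?F \<le> (\<Sum>j<Suc ?k. ?H j)"
    using sub B_F by (intro cond_entropy_cyl_le_partition) auto
  also have "\<dots> = (\<Sum>j<?k. ?H j)"
  proof -
    have "UNIV - \<Union>DD \<in> sets borel"
      using DD(1) part by (intro sets.compl_sets[of _ borel, simplified] sets.finite_Union)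
        (auto simp: finite_borel_partition_def)
    then have "?H ?k = 0"
      using DD(2) B_M C(5) by (intro cell_entropy_eq_0) (auto simp: B_def)
    then show ?thesis
      by simp
  qed
  also have "\<dots> \<le> (\<Sum>j<?k. fent l (\<lambda>i. y i (h j)))"
  proof (intro sum_mono)
    fix j assume "j \<in> {..<?k}"
    then have "h j \<in> DD" "C j \<subseteq> h j"
      using h C(4) by (auto simp: bij_betw_def)
    then show "?H j \<le> fent l (\<lambda>i. y i (h j))"
      using N(2,3) y B_M by (intro cell_entropy_le_fent[where D = "h j"]) (auto simp: B_def)
  qed
  also have "\<dots> = (\<Sum>D\<in>DD. fent l (\<lambda>i. y i D))"
    using h by (rule sum.reindex_bij_betw)
  finally show ?thesis .
qed

end

theorem corollary3p6:
  fixes l :: nat and p :: "nat \<Rightarrow> real" and S :: "nat \<Rightarrow> 'a::euclidean_space \<Rightarrow> 'a"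
    and DD :: "'a set set" and y :: "nat \<Rightarrow> 'a set \<Rightarrow> real"
  assumes contr: "\<And>i. i \<in> {1..l} \<Longrightarrow> contraction (S i)"
    and p_pos: "\<And>i. i \<in> {1..l} \<Longrightarrow> p i > 0"
    and p_sum: "(\<Sum>i\<in>{1..l}. p i) = 1"
    and part: "finite_borel_partition (ifs_measure l p S) DD"
    and y_nonneg: "\<And>i D. i \<in> {1..l} \<Longrightarrow> D \<in> DD \<Longrightarrow> y i D \<ge> 0"
    and y_bound: "\<And>i D. i \<in> {1..l} \<Longrightarrow> D \<in> DD \<Longrightarrow>
                    p i * measure (ifs_measure l p S) (S i -` D) \<le> y i D"
  shows "cond_entropy (bernoulli_measure l p) (cyl l ` {1..l})
           (vimage_algebra (space (bernoulli_measure l p)) (coding S) (sigma UNIV DD))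
         \<le> (\<Sum>D\<in>DD. fent l (\<lambda>i. y i D)) \<and>
         cond_entropy (bernoulli_measure l p) (cyl l ` {1..l})
           (vimage_algebra (space (bernoulli_measure l p)) (coding S) borel)
         \<le> (\<Sum>D\<in>DD. fent l (\<lambda>i. y i D))"
proof -
  interpret ifs l p S
    using contr p_pos p_sum by unfold_locales auto
  have DD: "DD \<subseteq> sets borel"
    using part by (simp add: finite_borel_partition_def)
  have sigma_DD: "sets (sigma UNIV DD) = sigma_sets UNIV DD"
    by (rule sets_measure_of) simp
  show ?thesis
  proof (intro conjI cond_entropy_vimage_le_sum_fent[OF part y_bound])
    show "sets (sigma UNIV DD) \<subseteq> sets borel"
      unfolding sigma_DD using DD by (metis sets.sigma_sets_subset space_borel)
    show "DD \<subseteq> sets (sigma UNIV DD)"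
      unfolding sigma_DD by (auto intro: sigma_sets.Basic)
  qed (use DD in auto)
qed

end
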